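(* Suppose $\hat F_R$ is $\lambda_R$-strongly convex with $\lambda_R\ge\lambda>0$, where $\lambda>0$ is such that $\hat F_S$ is $\lambda$-strongly convex for every dataset $S$. Then $\mathrm{RS}_{\mathrm{ERM}}(R)\le\frac{L}{n\lambda_R}$, $\mathrm{GS}_{\mathrm{ERM}}\le\Delta_{\mathrm{GS}}:=\frac{L}{n\lambda}$, and $$\frac{\mathrm{RS}_{\mathrm{ERM}}(R)}{\Delta_{\mathrm{GS}}}\le\frac{L/(n\lambda_R)}{L/(n\lambda)}=\frac{\lambda}{\lambda_R}.$$
   Context: Let $\mathcal{W}\subseteq\mathbb{R}^d$ and let $f:\mathcal{W}\times\mathcal{Z}\to\mathbb{R}$ be differentiable in $w$ and $L$-Lipschitz in $w$ uniformly over $z$ (so $\|\nabla_w f(w,z)\|_2\le L$). For a dataset $R=\{z_1,\dots,z_n\}$, $\hat F_R(w)=\frac1n\sum_{i=1}^nf(w,z_i)$ and $w_R=\arg\min_{w\in\mathcal{W}}\hat F_R(w)$; minimizers are assumed to be stationary points ($\nabla\hat F_R(w_R)=0$, e.g. $\mathcal{W}=\mathbb{R}^d$). $\hat F_R$ is $\lambda_R$-strongly convex if $\hat F_R(w)-\hat F_R(w')\ge\langle\nabla\hat F_R(w'),w-w'\rangle+\frac{\lambda_R}{2}\|w-w'\|^2$ for all $w,w'\in\mathcal{W}$. The retain sensitivity is $\mathrm{RS}_{\mathrm{ERM}}(R)=\sup_{z\in\mathcal{Z}}\|w_R-w_{R\cup\{z\}}\|$ and the global sensitivity is $\mathrm{GS}_{\mathrm{ERM}}=\sup_R\mathrm{RS}_{\mathrm{ERM}}(R)$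 over datasets $R$ of size $n$. *)

theory Defs
  imports "HOL-Analysis.Analysis" "HOL-Library.Multiset"
begin

text \<open>Datasets are finite multisets of data points; R \<union> {z} is add_mset z R.\<close>

definition emp_risk :: "('a \<Rightarrow> 'z \<Rightarrow> real) \<Rightarrow> 'z multiset \<Rightarrow> 'a \<Rightarrow> real" where
  "emp_risk f S w = (\<Sum>z\<in>#S. f w z) / real (size S)"

definition emp_grad :: "('a \<Rightarrow> 'z \<Rightarrow> 'a::real_vector) \<Rightarrow> 'z multiset \<Rightarrow> 'a \<Rightarrow> 'a" where
  "emp_grad gf S w = (1 / real (size S)) *\<^sub>R (\<Sum>z\<in>#S. gf w z)"

definition strongly_convex_grad ::
    "'a::real_inner set \<Rightarrow> ('a \<Rightarrow> real) \<Rightarrow> ('a \<Rightarrow> 'a) \<Rightarrow> real \<Rightarrow> bool" where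
  "strongly_convex_grad W F G lam \<longleftrightarrow>
     (\<forall>w\<in>W. \<forall>w'\<in>W. F w - F w' \<ge> inner (G w') (w - w') + lam / 2 * (norm (w - w'))\<^sup>2)"

text \<open>wopt S denotes the (chosen) empirical risk minimiser w_S.\<close>
definition retain_sens :: "('z multiset \<Rightarrow> 'a::real_normed_vector) \<Rightarrow> 'z multiset \<Rightarrow> real" where
  "retain_sens wopt R = (SUP z. norm (wopt R - wopt (add_mset z R)))"

definition global_sens :: "('z multiset \<Rightarrow> 'a::real_normed_vector) \<Rightarrow> nat \<Rightarrow> real" where
  "global_sens wopt n = (SUP R\<in>{R. size R = n}. retain_sens wopt R)"

end

theory Submission
  imports Defs
begin

text \<open>Strong convexity makes the gradient of \<open>F\<^sub>S\<close> \<open>\<lambda>\<close>-strongly monotone, hence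
  \<open>\<lambda> \<parallel>a - b\<parallel> \<le> \<parallel>\<nabla>F\<^sub>S a - \<nabla>F\<^sub>S b\<parallel>\<close>. Take \<open>a = w\<^sub>S\<close>, where \<open>\<nabla>F\<^sub>S\<close> vanishes, and
  \<open>b = w\<^sub>S\<^sub>'\<close> for \<open>S' = S + {z}\<close>: stationarity of \<open>F\<^sub>S\<^sub>'\<close> at \<open>b\<close> gives
  \<open>\<nabla>F\<^sub>S b = -\<nabla>f(b,z)/n\<close>, of norm at most \<open>L/n\<close>. Hence \<open>\<parallel>w\<^sub>S - w\<^sub>S\<^sub>'\<parallel> \<le> L/(n\<lambda>)\<close>, and
  suprema over \<open>z\<close> and \<open>S\<close> give the sensitivity bounds.\<close>

lemma strongly_convex_grad_imp_strongly_monotone: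
  assumes "strongly_convex_grad W F G lam" and "a \<in> W" and "b \<in> W"
  shows "lam * (norm (a - b))\<^sup>2 \<le> inner (G a - G b) (a - b)"
proof -
  have "F b - F a \<ge> inner (G a) (b - a) + lam / 2 * (norm (b - a))\<^sup>2"
    and "F a - F b \<ge> inner (G b) (a - b) + lam / 2 * (norm (a - b))\<^sup>2"
    using assms unfolding strongly_convex_grad_def by blast+
  moreover have "inner (G a) (b - a) = - inner (G a) (a - b)"
    by (simp add: inner_diff_right)
  ultimately show ?thesis
    by (simp add: norm_minus_commute inner_diff_left)
qed

lemma strongly_convex_grad_norm_diff_le:
  assumes "strongly_convex_grad W F G lam" and "a \<in> W" and "b \<in> W"
  shows "lam * norm (a - b) \<le> norm (G a - G b)"
proof (cases "a = b")
  case False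
  have "lam * norm (a - b) * norm (a - b) \<le> inner (G a - G b) (a - b)"
    using strongly_convex_grad_imp_strongly_monotone[OF assms]
    by (simp add: power2_eq_square mult.assoc)
  also have "\<dots> \<le> norm (G a - G b) * norm (a - b)"
    by (rule norm_cauchy_schwarz)
  finally show ?thesis
    using False by (simp add: mult_right_le_imp_le)
qed simp

lemma emp_grad_at_stationary_point_of_add_mset:
  assumes "emp_grad gf (add_mset z S) w = 0"
  shows "emp_grad gf S w = - (1 / real (size S)) *\<^sub>R gf w z"
proof -
  have "(1 / real (Suc (size S))) *\<^sub>R (gf w z + (\<Sum>y\<in>#S. gf w y)) = 0"
    using assms by (simp add: emp_grad_def)
  then have "(\<Sum>y\<in>#S. gf w y) = - gf w z"
    by (simp add: eq_neg_iff_add_eq_0 add.commute)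
  then show ?thesis
    by (simp add: emp_grad_def)
qed

lemma norm_minimiser_diff_add_mset_le:
  fixes gf :: "'a::real_inner \<Rightarrow> 'z \<Rightarrow> 'a"
  assumes grad_bound: "\<And>w z. w \<in> W \<Longrightarrow> norm (gf w z) \<le> L"
    and minimiser_in: "\<And>S. S \<noteq> {#} \<Longrightarrow> wopt S \<in> W"
    and stationary: "\<And>S. S \<noteq> {#} \<Longrightarrow> emp_grad gf S (wopt S) = 0"
    and "S \<noteq> {#}" and "c > 0"
    and sc: "strongly_convex_grad W (emp_risk f S) (emp_grad gf S) c"
  shows "norm (wopt S - wopt (add_mset z S)) \<le> L / (real (size S) * c)"
proof -
  define a b where "a = wopt S" and "b = wopt (add_mset z S)"
  have "a \<in> W" "b \<in> W"
    using minimiser_in \<open>S \<noteq> {#}\<close> by (auto simp: a_def b_def)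
  have n_pos: "real (size S) > 0"
    using \<open>S \<noteq> {#}\<close> by (simp add: nonempty_has_size)
  have "c * norm (a - b) \<le> norm (emp_grad gf S a - emp_grad gf S b)"
    using strongly_convex_grad_norm_diff_le[OF sc \<open>a \<in> W\<close> \<open>b \<in> W\<close>] .
  also have "\<dots> = norm (gf b z) / real (size S)"
    using stationary[OF \<open>S \<noteq> {#}\<close>] stationary[of "add_mset z S"]
    by (simp add: a_def b_def emp_grad_at_stationary_point_of_add_mset)
  also have "\<dots> \<le> L / real (size S)"
    using grad_bound[OF \<open>b \<in> W\<close>] n_pos by (simp add: divide_right_mono)
  finally show ?thesis
    using \<open>c > 0\<close> n_pos by (simp add: a_def b_def field_simps)
qed

lemma retain_sens_le:
  fixes gf :: "'a::real_inner \<Rightarrow> 'z \<Rightarrow> 'a"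
  assumes "\<And>w z. w \<in> W \<Longrightarrow> norm (gf w z) \<le> L"
    and "\<And>S. S \<noteq> {#} \<Longrightarrow> wopt S \<in> W"
    and "\<And>S. S \<noteq> {#} \<Longrightarrow> emp_grad gf S (wopt S) = 0"
    and "S \<noteq> {#}" and "c > 0"
    and "strongly_convex_grad W (emp_risk f S) (emp_grad gf S) c"
  shows "retain_sens wopt S \<le> L / (real (size S) * c)"
  unfolding retain_sens_def
  using norm_minimiser_diff_add_mset_le[OF assms] by (simp add: cSUP_least)

lemma global_sens_le:
  fixes wopt :: "'z multiset \<Rightarrow> 'a::real_normed_vector"
  assumes "\<And>R. size R = n \<Longrightarrow> retain_sens wopt R \<le> B"
  shows "global_sens wopt n \<le> B"
  unfolding global_sens_def
proof (rule cSUP_least)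
  have "size (replicate_mset n undefined :: 'z multiset) = n"
    by simp
  then show "{R :: 'z multiset. size R = n} \<noteq> {}"
    by blast
qed (simp add: assms)

lemma divide_le_ratio_of_bounds:
  fixes x L lam lamR :: real
  assumes "0 \<le> L" and "x \<le> L / (real n * lamR)" and "n > 0" and "lam > 0" and "lamR > 0"
  shows "x / (L / (real n * lam)) \<le> lam / lamR"
proof (cases "L = 0")
  case False
  then have "x / (L / (real n * lam)) \<le> (L / (real n * lamR)) / (L / (real n * lam))"
    using assms by (intro divide_right_mono) auto
  also have "\<dots> = lam / lamR"
    using False assms by (simp add: field_simps)
  finally show ?thesis .
qed (use assms in simp) \<comment> \<open>for \<open>L = 0\<close> the left-hand side is \<open>x / 0 = 0\<close>\<close>

theorem mainTheorem11:
  fixes W :: "'a::euclidean_space set"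
    and f :: "'a \<Rightarrow> 'z \<Rightarrow> real"
    and gf :: "'a \<Rightarrow> 'z \<Rightarrow> 'a"
    and wopt :: "'z multiset \<Rightarrow> 'a"
    and L lam lamR :: real and n :: nat and R :: "'z multiset"
  assumes deriv: "\<And>w z. w \<in> W \<Longrightarrow>
                    ((\<lambda>v. f v z) has_derivative (\<lambda>h. inner (gf w z) h)) (at w within W)"
    and lip: "\<And>z. L-lipschitz_on W (\<lambda>w. f w z)"
    and grad_bound: "\<And>w z. w \<in> W \<Longrightarrow> norm (gf w z) \<le> L"
    and minimiser: "\<And>S. S \<noteq> {#} \<Longrightarrow> wopt S \<in> W \<and>
                       (\<forall>w\<in>W. emp_risk f S (wopt S) \<le> emp_risk f S w)"
    and stationary: "\<And>S. S \<noteq> {#} \<Longrightarrow> emp_grad gf S (wopt S) = 0"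
    and n_pos: "n > 0"
    and lam_pos: "lam > 0"
    and sc_all: "\<And>S. size S = n \<Longrightarrow> strongly_convex_grad W (emp_risk f S) (emp_grad gf S) lam"
    and R_size: "size R = n"
    and sc_R: "strongly_convex_grad W (emp_risk f R) (emp_grad gf R) lamR"
    and lamR_ge: "lamR \<ge> lam"
  shows "retain_sens wopt R \<le> L / (real n * lamR)
         \<and> global_sens wopt n \<le> L / (real n * lam)
         \<and> retain_sens wopt R / (L / (real n * lam)) \<le> lam / lamR"
proof -
  have minimiser_in: "\<And>S. S \<noteq> {#} \<Longrightarrow> wopt S \<in> W"
    using minimiser by blast
  have nonempty: "\<And>S. size S = n \<Longrightarrow> S \<noteq> {#}"
    using n_pos by auto
  have retain_bound: "retain_sens wopt S \<le> L / (real n * c)"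
    if "size S = n" and "c > 0" and "strongly_convex_grad W (emp_risk f S) (emp_grad gf S) c" for S c
  proof -
    have "retain_sens wopt S \<le> L / (real (size S) * c)"
      by (rule retain_sens_le[where f = f]) (use grad_bound minimiser_in stationary nonempty that in auto)
    with \<open>size S = n\<close> show ?thesis
      by simp
  qed
  have lamR_pos: "lamR > 0"
    using lam_pos lamR_ge by linarith
  have retain: "retain_sens wopt R \<le> L / (real n * lamR)"
    using retain_bound[OF R_size lamR_pos sc_R] .
  have global: "global_sens wopt n \<le> L / (real n * lam)"
    using retain_bound[OF _ lam_pos sc_all] by (intro global_sens_le)
  have "0 \<le> L"
    using norm_ge_zero grad_bound[OF minimiser_in[OF nonempty[OF R_size]]] by (rule order_trans)
  then have "retain_sens wopt R / (L / (real n * lam)) \<le> lam / lamR"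
    using retain n_pos lam_pos lamR_pos by (rule divide_le_ratio_of_bounds)
  with retain global show ?thesis
    by blast
qed

end
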